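(* Let $m\geq1$, let $T$ be a $B$-tree of order $2m+1$ with $n$ keys and height at least $1$, let $n_1$ be the number of keys of $T$ not stored in leaves, and let $\pi\in S_n$ be a permutation which, used as key sequence, produces a history $(T_1,\dots,T_n=T)$. Let $i_1<\dots<i_{n_1}$ be the times $i$ at which inserting $\pi(i)$ causes the leaf receiving it to split, and let $K_{i_j}$ be the median key of that leaf (the key moved from the leaf into its parent at time $i_j$). Let $\pi^{(1)}\in S_{n_1}$ be the permutation order-isomorphic to $(K_{i_1},\dots,K_{i_{n_1}})$. Then $(T^{(1)}_{i_1},\dots,T^{(1)}_{i_{n_1}})$ is a history of $T^{(1)}$, and it is exactly the history produced by inserting the keys $\pi^{(1)}(1),\dots,\pi^{(1)}(n_1)$ successively; in particular $\pi^{(1)}$ produces the tree $T^{(1)}$.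
   Context: A $B$-tree of order $2m+1$ is a rooted plane search tree whose nodes contain pairwise distinct keys in increasing left-to-right order (a non-leaf node with $k$ keys has $k+1$ children, the $i$-th child's subtree containing keys between the $(i-1)$-th and $i$-th key), every non-root node has between $m$ and $2m$ keys, the root between $1$ and $2m$, and all leaves have equal depth. Insertion: place the new key in the appropriate leaf; whenever a node has $2m+1$ keys, split it, moving the median key up into the parent and forming two nodes from the $m$ smallest and the $m$ largest keys (creating a new one-key root if the root splits). A permutation $\pi\in S_n$ used as key sequence means inserting $\pi(1),\dots,\pi(n)$ successively starting from the empty tree; it produces the history $(T_1,\dots,T_n)$ where $T_i$ is the tree after $i$ insertions, trees being considered up to isomorphism of rooted plane trees (shape and number of keys per node). A history of a tree $T$ with $N$ keys is a sequence $(T_1,\dots,T_N=T)$ of $B$-trees with $T_1$ having one key and each $T_i$ obtained from $T_{i-1}$ by one insertion. For a $B$-tree $S$, $S^{(1)}$ denotes the tree obtained by deleting all leaves of $S$. *)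

theory Defs
  imports Main "HOL-Combinatorics.Permutations"
begin

datatype 'a btree = Node (bkeys: "'a list") (kids: "'a btree list")

text \<open>Shape of a tree: forget the keys (rooted plane tree with number of keys per node).\<close>
definition shape :: "'a btree \<Rightarrow> unit btree" where
  "shape t = map_btree (\<lambda>_. ()) t"

fun keyset :: "'a btree \<Rightarrow> 'a set" where
  "keyset (Node ks ts) = set ks \<union> \<Union> (set (map keyset ts))"

fun nkeys :: "'a btree \<Rightarrow> nat" where
  "nkeys (Node ks ts) = length ks + sum_list (map nkeys ts)"

fun inner_keys :: "'a btree \<Rightarrow> nat" where
  "inner_keys (Node ks ts) = (if ts = [] then 0 else length ks + sum_list (map inner_keys ts))"

fun height :: "'a btree \<Rightarrow> nat" where
  "height (Node ks ts) = (if ts = [] then 0 else Suc (Max (set (map height ts))))"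

fun balanced :: "'a btree \<Rightarrow> nat \<Rightarrow> bool" where
  "balanced (Node ks ts) d = (if ts = [] then d = 0 else d > 0 \<and> list_all (\<lambda>t. balanced t (d - 1)) ts)"

fun search_ok :: "nat \<Rightarrow> ('a::linorder) btree \<Rightarrow> bool" where
  "search_ok m (Node ks ts) =
     (sorted_wrt (<) ks \<and> (ts = [] \<or> length ts = length ks + 1) \<and>
      (\<forall>i < length ts. \<forall>k \<in> keyset (ts ! i).
          (0 < i \<longrightarrow> ks ! (i - 1) < k) \<and> (i < length ks \<longrightarrow> k < ks ! i)) \<and>
      list_all (\<lambda>t. m \<le> length (bkeys t) \<and> length (bkeys t) \<le> 2 * m \<and> search_ok m t) ts)"

definition is_btree :: "nat \<Rightarrow> ('a::linorder) btree \<Rightarrow> bool" where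
  "is_btree m t \<longleftrightarrow> 1 \<le> length (bkeys t) \<and> length (bkeys t) \<le> 2 * m \<and> search_ok m t
      \<and> balanced t (height t)"

datatype 'a up = Ok "'a btree" | Split "'a btree" 'a "'a btree"

definition split_node :: "nat \<Rightarrow> 'a list \<Rightarrow> 'a btree list \<Rightarrow> 'a up" where
  "split_node m ks ts =
     (if length ks = 2 * m + 1
      then Split (Node (take m ks) (take (m + 1) ts)) (ks ! m) (Node (drop (m + 1) ks) (drop (m + 1) ts))
      else Ok (Node ks ts))"

fun ins :: "nat \<Rightarrow> ('a::linorder) \<Rightarrow> 'a btree \<Rightarrow> 'a up" where
  "ins m x (Node ks ts) =
     (let i = length (filter (\<lambda>k. k < x) ks) in
      if ts = [] then split_node m (insort x ks) []
      else if i < length ts then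
        (case map (ins m x) ts ! i of
           Ok t' \<Rightarrow> Ok (Node ks (ts[i := t']))
         | Split l k r \<Rightarrow>
             split_node m (take i ks @ [k] @ drop i ks) (take i ts @ [l, r] @ drop (Suc i) ts))
      else Ok (Node ks ts))"

definition binsert :: "nat \<Rightarrow> ('a::linorder) \<Rightarrow> 'a btree \<Rightarrow> 'a btree" where
  "binsert m x t = (case ins m x t of Ok t' \<Rightarrow> t' | Split l k r \<Rightarrow> Node [k] [l, r])"

text \<open>Tree obtained by inserting the (nonempty) key sequence xs into the empty tree.\<close>
definition build :: "nat \<Rightarrow> ('a::linorder) list \<Rightarrow> 'a btree" where
  "build m xs = foldl (\<lambda>t x. binsert m x t) (Node [hd xs] []) (tl xs)"

definition bt_after :: "nat \<Rightarrow> (nat \<Rightarrow> nat) \<Rightarrow> nat \<Rightarrow> nat btree" where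
  "bt_after m \<pi> i = build m (map \<pi> [1..<i + 1])"

fun leaf_median :: "nat \<Rightarrow> ('a::linorder) \<Rightarrow> 'a btree \<Rightarrow> 'a option" where
  "leaf_median m x (Node ks ts) =
     (let i = length (filter (\<lambda>k. k < x) ks) in
      if ts = [] then (if length ks = 2 * m then Some (insort x ks ! m) else None)
      else if i < length ts then map (leaf_median m x) ts ! i
      else None)"

text \<open>S^(1): delete all leaves (for trees of height at least 1 with all leaves at equal depth).\<close>
fun del_leaves :: "'a btree \<Rightarrow> 'a btree" where
  "del_leaves (Node ks ts) =
     (if list_all (\<lambda>t. kids t = []) ts then Node ks [] else Node ks (map del_leaves ts))"

definition one_insertion :: "nat \<Rightarrow> unit btree \<Rightarrow> unit btree \<Rightarrow> bool" where
  "one_insertion m A B \<longleftrightarrow>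
     (\<exists>(S :: nat btree) x. is_btree m S \<and> x \<notin> keyset S \<and> shape S = A \<and> shape (binsert m x S) = B)"

definition is_history :: "nat \<Rightarrow> unit btree list \<Rightarrow> unit btree \<Rightarrow> bool" where
  "is_history m Ts T \<longleftrightarrow>
     length Ts = nkeys T \<and> Ts \<noteq> [] \<and> last Ts = T \<and>
     (\<forall>A \<in> set Ts. \<exists>(S :: nat btree). is_btree m S \<and> shape S = A) \<and>
     nkeys (hd Ts) = 1 \<and>
     (\<forall>i. Suc i < length Ts \<longrightarrow> one_insertion m (Ts ! i) (Ts ! Suc i))"

text \<open>Permutation (as list of values) order-isomorphic to a list of distinct keys.\<close>
definition std_perm :: "('a::linorder) list \<Rightarrow> nat list" where
  "std_perm ks = map (\<lambda>k. card {k' \<in> set ks. k' \<le> k}) ks"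

end

theory Submission
  imports Defs
begin

text \<open>
  Let \<open>t\<close> have height at least 1 and insert a fresh key \<open>x\<close>. If the leaf receiving \<open>x\<close> does not split,
  the tree without its leaves is unchanged. If it splits, its median \<open>K\<close> is pushed into the parent
  exactly where \<open>x\<close> would have gone, and from there on the splits propagate as when \<open>K\<close> is inserted
  into the tree without its leaves; moreover \<open>K\<close> is not a key of that tree. Hence, by induction
  along the key sequence, the tree without its leaves after \<open>i\<close> insertions is the tree built from the
  medians pushed out so far, and at the split times one sees the trees built from the prefixes of the
  median sequence. Finally the shape of a built tree depends only on the relative order of the keys,
  so the medians may be replaced by the order-isomorphic permutation.
\<close>

section \<open>Interleaving child traversals with keys\<close>

text \<open>
  \<open>interleave [c\<^sub>0, \<dots>, c\<^sub>n] [k\<^sub>1, \<dots>, k\<^sub>n] = c\<^sub>0 @ k\<^sub>1 # c\<^sub>1 @ \<dots> @ k\<^sub>n # c\<^sub>n\<close>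
  is the in-order traversal of a node whose children have traversals \<open>c\<^sub>i\<close>;
  \<open>interleave_left\<close> and \<open>interleave_right\<close> are the parts before and after \<open>c\<^sub>i\<close>.
\<close>

definition interleave :: "'a list list \<Rightarrow> 'a list \<Rightarrow> 'a list" where
  "interleave cs ks = hd cs @ concat (map2 Cons ks (tl cs))"

definition interleave_left :: "'a list list \<Rightarrow> 'a list \<Rightarrow> nat \<Rightarrow> 'a list" where
  "interleave_left cs ks i = concat (map2 (\<lambda>c k. c @ [k]) (take i cs) (take i ks))"

definition interleave_right :: "'a list list \<Rightarrow> 'a list \<Rightarrow> nat \<Rightarrow> 'a list" where
  "interleave_right cs ks i = concat (map2 Cons (drop i ks) (drop (Suc i) cs))"

lemma interleave_left_Suc:
  "i < length cs \<Longrightarrow> i < length ks \<Longrightarrow>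
   interleave_left cs ks (Suc i) = interleave_left cs ks i @ cs ! i @ [ks ! i]"
  by (simp add: interleave_left_def take_Suc_conv_app_nth)

lemma interleave_right_conv:
  assumes "i < length ks" "Suc i < length cs"
  shows "interleave_right cs ks i = ks ! i # cs ! Suc i @ interleave_right cs ks (Suc i)"
proof -
  have "drop i ks = ks ! i # drop (Suc i) ks" "drop (Suc i) cs = cs ! Suc i # drop (Suc (Suc i)) cs"
    using assms by (simp_all add: Cons_nth_drop_Suc)
  then show ?thesis by (simp add: interleave_right_def)
qed

lemma interleave_split:
  assumes "length cs = Suc (length ks)" "i < length cs"
  shows "interleave cs ks = interleave_left cs ks i @ cs ! i @ interleave_right cs ks i"
  using assms(2)
proof (induction i)
  case 0
  then show ?case by (cases cs) (simp_all add: interleave_def interleave_left_def interleave_right_def)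
next
  case (Suc i)
  then show ?case using assms(1) by (simp add: interleave_left_Suc interleave_right_conv)
qed

lemma interleave_take:
  assumes "length cs = Suc (length ks)" "i < length cs"
  shows "interleave (take (Suc i) cs) (take i ks) = interleave_left cs ks i @ cs ! i"
proof -
  have "interleave (take (Suc i) cs) (take i ks) =
      interleave_left (take (Suc i) cs) (take i ks) i @ take (Suc i) cs ! i @
      interleave_right (take (Suc i) cs) (take i ks) i"
    using assms by (intro interleave_split) auto
  then show ?thesis using assms by (simp add: interleave_left_def interleave_right_def min_def)
qed

lemma interleave_drop:
  assumes "i < length ks" "length cs = Suc (length ks)"
  shows "interleave_right cs ks i = ks ! i # interleave (drop (Suc i) cs) (drop (Suc i) ks)"
proof -
  have "interleave (drop (Suc i) cs) (drop (Suc i) ks) = cs ! Suc i @ interleave_right cs ks (Suc i)"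
    using assms by (simp add: interleave_def interleave_right_def hd_drop_conv_nth tl_drop drop_Suc nth_tl)
  then show ?thesis using assms by (simp add: interleave_right_conv)
qed

lemma interleave_update:
  assumes "length cs = Suc (length ks)" "i < length cs"
  shows "interleave (cs[i := c]) ks = interleave_left cs ks i @ c @ interleave_right cs ks i"
  using interleave_split[of "cs[i := c]" ks i] assms
  by (simp add: interleave_left_def interleave_right_def)

lemma interleave_insert:
  assumes "length cs = Suc (length ks)" "i < length cs"
  shows "interleave (take i cs @ l # r # drop (Suc i) cs) (take i ks @ k # drop i ks)
       = interleave_left cs ks i @ l @ k # r @ interleave_right cs ks i"
proof -
  let ?cs = "take i cs @ l # r # drop (Suc i) cs" and ?ks = "take i ks @ k # drop i ks"
  have "interleave ?cs ?ks = interleave_left ?cs ?ks i @ ?cs ! i @ interleave_right ?cs ?ks i"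
    using assms by (intro interleave_split) auto
  moreover have "interleave_left ?cs ?ks i = interleave_left cs ks i"
    using assms by (simp add: interleave_left_def)
  moreover have "interleave_right ?cs ?ks i = k # r @ interleave_right cs ks i"
    using assms by (simp add: interleave_right_def nth_append)
  ultimately show ?thesis using assms by (simp add: nth_append)
qed

lemma set_concat_map2_snoc:
  "length cs = length ks \<Longrightarrow> set (concat (map2 (\<lambda>c k. c @ [k]) cs ks)) = \<Union> (set ` set cs) \<union> set ks"
  by (induction cs ks rule: list_induct2) auto

lemma set_concat_map2_Cons:
  "length cs = length ks \<Longrightarrow> set (concat (map2 Cons ks cs)) = \<Union> (set ` set cs) \<union> set ks"
  by (induction cs ks rule: list_induct2) auto

lemma set_interleave_left:
  "i \<le> length ks \<Longrightarrow> length cs = Suc (length ks) \<Longrightarrow>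
   set (interleave_left cs ks i) = \<Union> (set ` set (take i cs)) \<union> set (take i ks)"
  unfolding interleave_left_def by (subst set_concat_map2_snoc) auto

lemma set_interleave_right:
  "length cs = Suc (length ks) \<Longrightarrow>
   set (interleave_right cs ks i) = \<Union> (set ` set (drop (Suc i) cs)) \<union> set (drop i ks)"
  unfolding interleave_right_def by (subst set_concat_map2_Cons) auto

lemma set_interleave:
  "length cs = Suc (length ks) \<Longrightarrow> set (interleave cs ks) = \<Union> (set ` set cs) \<union> set ks"
  by (cases cs) (simp_all add: interleave_def set_concat_map2_Cons Un_assoc del: set_concat)

lemma length_interleave:
  "length cs = Suc (length ks) \<Longrightarrow> length (interleave cs ks) = sum_list (map length cs) + length ks"
proof -
  have "length cs' = length ks \<Longrightarrow> length (concat (map2 Cons ks cs')) = sum_list (map length cs') + length ks"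
    for cs' by (induction cs' ks rule: list_induct2) auto
  then show "length cs = Suc (length ks) \<Longrightarrow> ?thesis" by (cases cs) (auto simp: interleave_def)
qed

section \<open>Slots between keys\<close>

text \<open>\<open>in_slot ks i y\<close>: a search for \<open>y\<close> in a node with keys \<open>ks\<close> descends into child \<open>i\<close>.\<close>

definition in_slot :: "'a::linorder list \<Rightarrow> nat \<Rightarrow> 'a \<Rightarrow> bool" where
  "in_slot ks i y \<longleftrightarrow> (\<forall>a\<in>set (take i ks). a < y) \<and> (\<forall>b\<in>set (drop i ks). y < b)"

lemma in_slot_Cons: "in_slot ks i y \<Longrightarrow> a < y \<Longrightarrow> in_slot (a # ks) (Suc i) y"
  by (simp add: in_slot_def)

lemma in_slot_count:
  "sorted_wrt (<) ks \<Longrightarrow> y \<notin> set ks \<Longrightarrow> in_slot ks (length (filter (\<lambda>k. k < y) ks)) y"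
proof (induction ks)
  case (Cons a ks)
  show ?case
  proof (cases "a < y")
    case True
    have "sorted_wrt (<) ks" "y \<notin> set ks" using Cons.prems by auto
    then have "in_slot ks (length (filter (\<lambda>k. k < y) ks)) y" by (rule Cons.IH)
    then show ?thesis using True by (simp add: in_slot_Cons)
  next
    case False
    then have "y < a" using Cons.prems(2) by auto
    then have "\<forall>b\<in>set (a # ks). y < b" using Cons.prems(1) by (auto dest: order.strict_trans)
    moreover from this have "filter (\<lambda>k. k < y) (a # ks) = []" by (auto simp: filter_empty_conv)
    ultimately show ?thesis by (simp add: in_slot_def)
  qed
qed (simp add: in_slot_def)

lemma filter_less_in_slot: "in_slot ks i y \<Longrightarrow> filter (\<lambda>k. k < y) ks = take i ks"
proof -
  assume "in_slot ks i y"
  then have "filter (\<lambda>k. k < y) (take i ks) = take i ks" "filter (\<lambda>k. k < y) (drop i ks) = []"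
    by (auto simp: in_slot_def filter_empty_conv)
  then show ?thesis by (metis append_Nil2 append_take_drop_id filter_append)
qed

lemma insort_between:
  assumes "\<forall>a\<in>set xs. a < y" "\<forall>b\<in>set zs. y < b"
  shows "insort y (xs @ ys @ zs) = xs @ insort y ys @ zs"
proof -
  have "insort y (ys @ zs) = insort y ys @ zs"
  proof (induction ys)
    case Nil
    then show ?case using assms(2) by (cases zs) auto
  qed auto
  then show ?thesis using assms(1) by (induction xs) auto
qed

lemma insort_in_slot: "in_slot ks i y \<Longrightarrow> insort y ks = take i ks @ y # drop i ks"
  using insort_between[of "take i ks" y "drop i ks" "[]"] by (simp add: in_slot_def)

lemma in_slot_notin: "in_slot ks i y \<Longrightarrow> y \<notin> set ks"
  unfolding in_slot_def by (metis Un_iff append_take_drop_id less_irrefl set_append)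

lemma in_slot_nth:
  assumes "in_slot ks i y" "i \<le> length ks"
  shows "(0 < i \<longrightarrow> ks ! (i - 1) < y) \<and> (i < length ks \<longrightarrow> y < ks ! i)"
proof -
  have "0 < i \<Longrightarrow> ks ! (i - 1) \<in> set (take i ks)"
    using assms(2) by (auto simp: in_set_conv_nth intro!: exI[of _ "i - 1"])
  moreover have "i < length ks \<Longrightarrow> ks ! i \<in> set (drop i ks)"
    by (auto simp: in_set_conv_nth intro!: exI[of _ 0])
  ultimately show ?thesis using assms(1) by (auto simp: in_slot_def)
qed

lemma sorted_interleave_keys:
  assumes "length cs = Suc (length ks)" "sorted_wrt (<) (interleave cs ks)"
  shows "sorted_wrt (<) ks"
proof -
  have "sorted_wrt (<) ks" if "length cs' = length ks" "sorted_wrt (<) (concat (map2 Cons ks cs'))" for cs'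
    using that
  proof (induction cs' ks rule: list_induct2)
    case (Cons c cs' k ks)
    have "set ks \<subseteq> set (concat (map2 Cons ks cs'))"
      using Cons.hyps by (simp add: set_concat_map2_Cons del: set_concat)
    then show ?case using Cons by (auto simp: sorted_wrt_append)
  qed simp
  then show ?thesis using assms by (cases cs) (auto simp: interleave_def sorted_wrt_append)
qed

lemma in_slot_interleave:
  assumes len: "length cs = Suc (length ks)" and i: "i < length cs"
    and sorted: "sorted_wrt (<) (interleave cs ks)" and slot: "in_slot ks i y"
  shows "(\<forall>a\<in>set (interleave_left cs ks i). a < y) \<and> (\<forall>b\<in>set (interleave_right cs ks i). y < b)"
proof
  have s: "sorted_wrt (<) (interleave_left cs ks i @ cs ! i @ interleave_right cs ks i)"
    using sorted interleave_split[OF len i] by simp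
  show "\<forall>a\<in>set (interleave_left cs ks i). a < y"
  proof (cases i)
    case (Suc j)
    then have "interleave_left cs ks i = interleave_left cs ks j @ cs ! j @ [ks ! j]"
      using len i by (simp add: interleave_left_Suc)
    moreover have "\<forall>a\<in>set (interleave_left cs ks j @ cs ! j). a < ks ! j"
      using s calculation by (auto simp: sorted_wrt_append)
    moreover have "ks ! j < y"
      using slot Suc len i by (auto simp: in_slot_def take_Suc_conv_app_nth)
    ultimately show ?thesis by (auto dest: order.strict_trans)
  qed (simp add: interleave_left_def)
  show "\<forall>b\<in>set (interleave_right cs ks i). y < b"
  proof (cases "i < length ks")
    case True
    then have "interleave_right cs ks i = ks ! i # cs ! Suc i @ interleave_right cs ks (Suc i)"
      using len by (simp add: interleave_right_conv)
    moreover have "\<forall>b\<in>set (cs ! Suc i @ interleave_right cs ks (Suc i)). ks ! i < b"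
      using s calculation by (auto simp: sorted_wrt_append)
    moreover have "y < ks ! i"
      using slot True by (auto simp: in_slot_def Cons_nth_drop_Suc[symmetric])
    ultimately show ?thesis by (auto dest: order.strict_trans)
  qed (simp add: interleave_right_def)
qed

lemma in_slot_interleave_child:
  assumes len: "length cs = Suc (length ks)" and i: "i < length cs"
    and sorted: "sorted_wrt (<) (interleave cs ks)" and y: "y \<in> set (cs ! i)"
  shows "in_slot ks i y"
proof -
  have "sorted_wrt (<) (interleave_left cs ks i @ cs ! i @ interleave_right cs ks i)"
    using sorted interleave_split[OF len i] by simp
  moreover have "set (take i ks) \<subseteq> set (interleave_left cs ks i)"
    using len i by (simp add: set_interleave_left)
  moreover have "set (drop i ks) \<subseteq> set (interleave_right cs ks i)"
    using len by (simp add: set_interleave_right)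
  ultimately show ?thesis using y by (fastforce simp: in_slot_def sorted_wrt_append)
qed

section \<open>Insertion preserves the B-tree invariant\<close>

fun inorder :: "'a btree \<Rightarrow> 'a list" where
  "inorder (Node ks ts) = (if ts = [] then ks else interleave (map inorder ts) ks)"

fun well_sized :: "nat \<Rightarrow> 'a btree \<Rightarrow> bool" where
  "well_sized m (Node ks ts) \<longleftrightarrow> (ts = [] \<or> length ts = Suc (length ks)) \<and>
     (\<forall>t\<in>set ts. m \<le> length (bkeys t) \<and> length (bkeys t) \<le> 2 * m \<and> well_sized m t)"

lemma keyset_inorder: "well_sized m t \<Longrightarrow> keyset t = set (inorder t)"
proof (induction t)
  case (Node ks ts)
  then show ?case by (auto simp: set_interleave)
qed

lemma nkeys_inorder: "well_sized m t \<Longrightarrow> nkeys t = length (inorder t)"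
proof (induction t)
  case (Node ks ts)
  show ?case
  proof (cases "ts = []")
    case False
    then have "length (map inorder ts) = Suc (length ks)" using Node.prems by simp
    moreover have "map nkeys ts = map length (map inorder ts)" using Node by simp
    ultimately show ?thesis using False by (simp add: length_interleave del: map_map)
  qed simp
qed

definition ins_parent :: "nat \<Rightarrow> 'a list \<Rightarrow> 'a btree list \<Rightarrow> nat \<Rightarrow> 'a up \<Rightarrow> 'a up" where
  "ins_parent m ks ts i u = (case u of
      Ok t \<Rightarrow> Ok (Node ks (ts[i := t]))
    | Split l k r \<Rightarrow> split_node m (take i ks @ k # drop i ks) (take i ts @ l # r # drop (Suc i) ts))"

lemma ins_Node:
  "ts \<noteq> [] \<Longrightarrow> length (filter (\<lambda>k. k < x) ks) = i \<Longrightarrow> i < length ts \<Longrightarrow>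
   ins m x (Node ks ts) = ins_parent m ks ts i (ins m x (ts ! i))"
  by (simp add: Let_def ins_parent_def split: up.split)

lemma leaf_median_Node:
  "ts \<noteq> [] \<Longrightarrow> length (filter (\<lambda>k. k < x) ks) = i \<Longrightarrow> i < length ts \<Longrightarrow>
   leaf_median m x (Node ks ts) = leaf_median m x (ts ! i)"
  by (simp add: Let_def)

lemma inorder_Node_split:
  "well_sized m (Node ks ts) \<Longrightarrow> ts \<noteq> [] \<Longrightarrow> i < length ts \<Longrightarrow>
   inorder (Node ks ts) =
     interleave_left (map inorder ts) ks i @ inorder (ts ! i) @ interleave_right (map inorder ts) ks i"
  using interleave_split[of "map inorder ts" ks i] by simp

lemma Node_descend:
  assumes "well_sized m (Node ks ts)" "ts \<noteq> []"
    and "sorted_wrt (<) (inorder (Node ks ts))" "x \<notin> set (inorder (Node ks ts))"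
  defines "i \<equiv> length (filter (\<lambda>k. k < x) ks)"
  shows "i < length ts" "in_slot ks i x" "sorted_wrt (<) (inorder (ts ! i))" "x \<notin> set (inorder (ts ! i))"
    and "ins m x (Node ks ts) = ins_parent m ks ts i (ins m x (ts ! i))"
    and "leaf_median m x (Node ks ts) = leaf_median m x (ts ! i)"
proof -
  have len: "length (map inorder ts) = Suc (length ks)" using assms(1,2) by simp
  show i: "i < length ts" using len by (simp add: i_def le_imp_less_Suc)
  have "sorted_wrt (<) ks" using sorted_interleave_keys[OF len] assms(2,3) by simp
  moreover have "x \<notin> set ks" using set_interleave[OF len] assms(2,4) by simp
  ultimately show "in_slot ks i x" unfolding i_def by (rule in_slot_count)
  show "sorted_wrt (<) (inorder (ts ! i))" "x \<notin> set (inorder (ts ! i))"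
    using inorder_Node_split[OF assms(1,2) i] assms(3,4) by (auto simp: sorted_wrt_append)
  show "ins m x (Node ks ts) = ins_parent m ks ts i (ins m x (ts ! i))"
    using ins_Node[OF assms(2) _ i] i_def by simp
  show "leaf_median m x (Node ks ts) = leaf_median m x (ts ! i)"
    using leaf_median_Node[OF assms(2) _ i] i_def by simp
qed

text \<open>
  The bound \<open>n0\<close> records that a root which does not split keeps at least its old number of
  keys, so that a child keeps at least \<open>m\<close> keys.
\<close>

definition up_invar :: "nat \<Rightarrow> nat \<Rightarrow> 'a list \<Rightarrow> nat \<Rightarrow> 'a up \<Rightarrow> bool" where
  "up_invar m d xs n0 u = (case u of
      Ok t \<Rightarrow> well_sized m t \<and> balanced t d \<and> inorder t = xs \<and>
        n0 \<le> length (bkeys t) \<and> length (bkeys t) \<le> 2 * m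
    | Split l k r \<Rightarrow> well_sized m l \<and> well_sized m r \<and> balanced l d \<and> balanced r d \<and>
        inorder l @ k # inorder r = xs \<and> length (bkeys l) = m \<and> length (bkeys r) = m)"

lemma up_invar_split_leaf:
  assumes "1 \<le> m" "length ks \<le> 2 * m + 1" "n0 \<le> length ks"
  shows "up_invar m 0 ks n0 (split_node m ks [])"
proof (cases "length ks = 2 * m + 1")
  case True
  then have "take m ks @ ks ! m # drop (Suc m) ks = ks" using id_take_nth_drop[of m ks] by simp
  then show ?thesis using True by (simp add: up_invar_def split_node_def)
qed (use assms in \<open>simp add: up_invar_def split_node_def\<close>)

lemma up_invar_split_inner:
  assumes "1 \<le> m" "length ts = Suc (length ks)" "0 < d"
    and children: "\<forall>t\<in>set ts. m \<le> length (bkeys t) \<and> length (bkeys t) \<le> 2 * m \<and>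
      well_sized m t \<and> balanced t (d - 1)"
    and "length ks \<le> 2 * m + 1" "n0 \<le> length ks"
  shows "up_invar m d (inorder (Node ks ts)) n0 (split_node m ks ts)"
proof (cases "length ks = 2 * m + 1")
  case True
  let ?l = "Node (take m ks) (take (Suc m) ts)" and ?r = "Node (drop (Suc m) ks) (drop (Suc m) ts)"
  have m: "m < length ks" "Suc m < length ts" "ts \<noteq> []" using True assms(2) by auto
  have "inorder ?l @ ks ! m # inorder ?r = inorder (Node ks ts)"
    using interleave_split[of "map inorder ts" ks m] interleave_take[of "map inorder ts" ks m]
      interleave_drop[of m ks "map inorder ts"] m assms(2)
    by (simp add: take_map drop_map)
  moreover have "set (take (Suc m) ts) \<subseteq> set ts" "set (drop (Suc m) ts) \<subseteq> set ts"
    by (auto dest: in_set_takeD in_set_dropD)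
  ultimately show ?thesis
    using True m assms by (auto simp: up_invar_def split_node_def list_all_iff)
next
  case False
  then show ?thesis using assms by (auto simp: up_invar_def split_node_def list_all_iff)
qed

lemma up_invar_ins_parent:
  assumes "1 \<le> m" "length ts = Suc (length ks)" "i < length ts" "0 < d" "length ks \<le> 2 * m"
    and children: "\<forall>t\<in>set ts. m \<le> length (bkeys t) \<and> length (bkeys t) \<le> 2 * m \<and>
      well_sized m t \<and> balanced t (d - 1)"
    and child: "up_invar m (d - 1) xs (length (bkeys (ts ! i))) u"
  shows "up_invar m d (interleave_left (map inorder ts) ks i @ xs @ interleave_right (map inorder ts) ks i)
    (length ks) (ins_parent m ks ts i u)"
proof (cases u)
  case (Ok t)
  have "inorder (Node ks (ts[i := t])) =
      interleave_left (map inorder ts) ks i @ inorder t @ interleave_right (map inorder ts) ks i"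
    using interleave_update[of "map inorder ts" ks i "inorder t"] assms(2,3) by (auto simp: map_update)
  moreover have t: "well_sized m t" "balanced t (d - 1)" "inorder t = xs" "m \<le> length (bkeys t)"
    "length (bkeys t) \<le> 2 * m"
    using Ok child children assms(3) by (auto simp: up_invar_def dest: order_trans)
  moreover have "\<forall>t'\<in>set (ts[i := t]). m \<le> length (bkeys t') \<and> length (bkeys t') \<le> 2 * m \<and>
      well_sized m t' \<and> balanced t' (d - 1)"
    using t children set_update_subset_insert[of ts i t] by auto
  ultimately show ?thesis
    using Ok assms(2-5) by (auto simp: up_invar_def ins_parent_def list_all_iff)
next
  case (Split l k r)
  let ?ks = "take i ks @ k # drop i ks" and ?ts = "take i ts @ l # r # drop (Suc i) ts"
  have "inorder (Node ?ks ?ts) =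
      interleave_left (map inorder ts) ks i @ inorder l @ k # inorder r @
      interleave_right (map inorder ts) ks i"
    using interleave_insert[of "map inorder ts" ks i "inorder l" "inorder r" k] assms(2,3)
    by (simp add: take_map drop_map)
  then have inorder_eq: "inorder (Node ?ks ?ts) =
      interleave_left (map inorder ts) ks i @ xs @ interleave_right (map inorder ts) ks i"
    using child Split by (simp add: up_invar_def)
  have "set ?ts \<subseteq> set ts \<union> {l, r}" by (auto dest: in_set_takeD in_set_dropD)
  then have "\<forall>t\<in>set ?ts. m \<le> length (bkeys t) \<and> length (bkeys t) \<le> 2 * m \<and>
      well_sized m t \<and> balanced t (d - 1)"
    using children child Split by (auto simp: up_invar_def)
  then have "up_invar m d (inorder (Node ?ks ?ts)) (length ks) (split_node m ?ks ?ts)"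
    by (intro up_invar_split_inner[OF assms(1)]) (use assms(2-5) in auto)
  then show ?thesis using Split inorder_eq by (simp add: ins_parent_def)
qed

lemma up_invar_ins:
  fixes t :: "'a::linorder btree"
  assumes "1 \<le> m" "well_sized m t" "balanced t d" "sorted_wrt (<) (inorder t)" "x \<notin> set (inorder t)"
    and "length (bkeys t) \<le> 2 * m"
  shows "up_invar m d (insort x (inorder t)) (length (bkeys t)) (ins m x t)"
  using assms(2-)
proof (induction t arbitrary: d)
  case (Node ks ts)
  show ?case
  proof (cases "ts = []")
    case True
    then show ?thesis
      using Node.prems assms(1) up_invar_split_leaf[of m "insort x ks" "length ks"]
      by (simp add: length_insort)
  next
    case False
    define i where "i = length (filter (\<lambda>k. k < x) ks)"
    note descend = Node_descend[OF Node.prems(1) False Node.prems(3,4), folded i_def]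
    have len: "length ts = Suc (length ks)" using Node.prems(1) False by simp
    have d: "0 < d" and children: "\<forall>t\<in>set ts. m \<le> length (bkeys t) \<and> length (bkeys t) \<le> 2 * m \<and>
        well_sized m t \<and> balanced t (d - 1)"
      using Node.prems(1,2) False by (auto simp: list_all_iff)
    have "up_invar m (d - 1) (insort x (inorder (ts ! i))) (length (bkeys (ts ! i))) (ins m x (ts ! i))"
      using Node.IH[of "ts ! i" "d - 1"] children descend by simp
    then have "up_invar m d (interleave_left (map inorder ts) ks i @ insort x (inorder (ts ! i)) @
        interleave_right (map inorder ts) ks i) (length ks) (ins m x (Node ks ts))"
      using up_invar_ins_parent[OF assms(1) len descend(1) d Node.prems(5)[simplified] children] descend(5)
      by simp
    moreover have "insort x (inorder (Node ks ts)) =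
        interleave_left (map inorder ts) ks i @ insort x (inorder (ts ! i)) @
        interleave_right (map inorder ts) ks i"
      using inorder_Node_split[OF Node.prems(1) False descend(1)]
        in_slot_interleave[of "map inorder ts" ks i x] len descend(1,2) Node.prems(3) False
      by (simp add: insort_between)
    ultimately show ?thesis by simp
  qed
qed

lemma balanced_height: "balanced t d \<Longrightarrow> height t = d"
proof (induction t arbitrary: d)
  case (Node ks ts)
  show ?case
  proof (cases "ts = []")
    case False
    then have "\<forall>t\<in>set ts. height t = d - 1" using Node by (auto simp: list_all_iff)
    then have "set (map height ts) = {d - 1}" using False by (cases ts) auto
    then show ?thesis using False Node.prems by simp
  qed (use Node.prems in simp)
qed

lemma search_ok_if_sorted:
  fixes t :: "'a::linorder btree"
  shows "well_sized m t \<Longrightarrow> sorted_wrt (<) (inorder t) \<Longrightarrow> search_ok m t"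
proof (induction t)
  case (Node ks ts)
  show ?case
  proof (cases "ts = []")
    case False
    have len: "length (map inorder ts) = Suc (length ks)" using Node.prems(1) False by simp
    have sorted: "sorted_wrt (<) (interleave (map inorder ts) ks)" using Node.prems(2) False by simp
    have "(0 < i \<longrightarrow> ks ! (i - 1) < k) \<and> (i < length ks \<longrightarrow> k < ks ! i)"
      if "i < length ts" "k \<in> keyset (ts ! i)" for i k
    proof (rule in_slot_nth)
      show "in_slot ks i k"
        using in_slot_interleave_child[OF len _ sorted, of i k] that Node.prems(1)
          keyset_inorder[of m "ts ! i"]
        by simp
    qed (use that len in simp)
    then have slots: "\<forall>i < length ts. \<forall>k \<in> keyset (ts ! i).
        (0 < i \<longrightarrow> ks ! (i - 1) < k) \<and> (i < length ks \<longrightarrow> k < ks ! i)"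
      by blast
    have "sorted_wrt (<) (inorder t)" if "t \<in> set ts" for t
    proof -
      obtain i where "i < length ts" "t = ts ! i" using \<open>t \<in> set ts\<close> by (auto simp: in_set_conv_nth)
      then show ?thesis
        using inorder_Node_split[OF Node.prems(1) False] Node.prems(2) by (simp add: sorted_wrt_append)
    qed
    then show ?thesis
      using Node slots sorted_interleave_keys[OF len sorted] len by (auto simp: list_all_iff)
  qed (use Node.prems in simp)
qed

definition btree_invar :: "nat \<Rightarrow> 'a::linorder btree \<Rightarrow> nat \<Rightarrow> bool" where
  "btree_invar m t d \<longleftrightarrow> well_sized m t \<and> balanced t d \<and> sorted_wrt (<) (inorder t) \<and>
     1 \<le> length (bkeys t) \<and> length (bkeys t) \<le> 2 * m"

lemma is_btree_if_invar: "btree_invar m t d \<Longrightarrow> is_btree m t"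
  unfolding btree_invar_def is_btree_def using search_ok_if_sorted balanced_height by metis

lemma binsert_invar:
  assumes "1 \<le> m" "btree_invar m t d" "x \<notin> set (inorder t)"
  shows "\<exists>d'. d \<le> d' \<and> btree_invar m (binsert m x t) d' \<and> inorder (binsert m x t) = insort x (inorder t)"
proof -
  have up: "up_invar m d (insort x (inorder t)) (length (bkeys t)) (ins m x t)"
    using up_invar_ins[of m t d x] assms by (simp add: btree_invar_def)
  have sorted: "sorted_wrt (<) (insort x (inorder t))"
    using assms by (simp add: btree_invar_def strict_sorted_iff sorted_insort distinct_insort)
  show ?thesis
  proof (cases "ins m x t")
    case (Ok t')
    then show ?thesis using up sorted assms by (auto simp: up_invar_def btree_invar_def binsert_def)
  next
    case (Split l k r)
    then have "btree_invar m (binsert m x t) (Suc d)"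
      using up sorted assms by (auto simp: up_invar_def btree_invar_def binsert_def interleave_def)
    moreover have "inorder (binsert m x t) = insort x (inorder t)"
      using up Split by (simp add: up_invar_def binsert_def interleave_def)
    ultimately show ?thesis using le_SucI by blast
  qed
qed

lemma build_snoc: "xs \<noteq> [] \<Longrightarrow> build m (xs @ [y]) = binsert m y (build m xs)"
  by (cases xs) (simp_all add: build_def)

lemma build_singleton: "build m [x] = Node [x] []"
  by (simp add: build_def)

lemma build_invar:
  fixes xs :: "'a::linorder list"
  assumes "1 \<le> m" "distinct xs" "xs \<noteq> []"
  shows "\<exists>d. btree_invar m (build m xs) d \<and> set (inorder (build m xs)) = set xs"
  using assms(2,3)
proof (induction xs rule: rev_induct)
  case (snoc y ys)
  show ?case
  proof (cases "ys = []")
    case True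
    then show ?thesis using assms(1) by (auto simp: build_singleton btree_invar_def)
  next
    case False
    then obtain d where d: "btree_invar m (build m ys) d" "set (inorder (build m ys)) = set ys"
      using snoc by auto
    moreover have "y \<notin> set (inorder (build m ys))" using d(2) snoc.prems by simp
    ultimately obtain d' where "btree_invar m (binsert m y (build m ys)) d'"
        "inorder (binsert m y (build m ys)) = insort y (inorder (build m ys))"
      using binsert_invar[OF assms(1)] by blast
    then show ?thesis using d(2) build_snoc[OF False] by (auto simp: set_insort_key)
  qed
qed simp

lemma keyset_build:
  fixes xs :: "'a::linorder list"
  shows "1 \<le> m \<Longrightarrow> distinct xs \<Longrightarrow> xs \<noteq> [] \<Longrightarrow> keyset (build m xs) = set xs"
  using build_invar keyset_inorder unfolding btree_invar_def by metis

lemma nkeys_build: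
  fixes xs :: "'a::linorder list"
  assumes "1 \<le> m" "distinct xs" "xs \<noteq> []"
  shows "nkeys (build m xs) = length xs"
proof -
  obtain d where d: "btree_invar m (build m xs) d" "set (inorder (build m xs)) = set xs"
    using build_invar[OF assms] by blast
  then have "length (inorder (build m xs)) = length xs"
    using assms(2) by (metis btree_invar_def distinct_card strict_sorted_iff)
  then show ?thesis using d(1) nkeys_inorder[of m "build m xs"] by (simp add: btree_invar_def)
qed

section \<open>Order-isomorphic relabelling of keys\<close>

lemma insort_map_strict_mono:
  "strict_mono_on (insert x (set ks)) f \<Longrightarrow> insort (f x) (map f ks) = map f (insort x ks)"
proof (induction ks)
  case (Cons a ks)
  then have "strict_mono_on (insert x (set ks)) f" by (auto intro: monotone_on_subset)
  moreover have "f x \<le> f a \<longleftrightarrow> x \<le> a" using Cons.prems by (simp add: strict_mono_on_less_eq)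
  ultimately show ?case using Cons.IH by simp
qed simp

lemma split_node_map: "map_up f (split_node m ks ts) = split_node m (map f ks) (map (map_btree f) ts)"
  by (simp add: split_node_def take_map drop_map)

lemma ins_map:
  "strict_mono_on (insert x (keyset t)) f \<Longrightarrow> ins m (f x) (map_btree f t) = map_up f (ins m x t)"
proof (induction t)
  case (Node ks ts)
  have mono_ks: "strict_mono_on (insert x (set ks)) f"
    using Node.prems by (auto intro: monotone_on_subset)
  have "filter (\<lambda>k. f k < f x) ks = filter (\<lambda>k. k < x) ks"
    using mono_ks by (intro filter_cong) (auto simp: strict_mono_on_less)
  then have "filter (\<lambda>k. k < f x) (map f ks) = map f (filter (\<lambda>k. k < x) ks)"
    by (simp add: filter_map comp_def)
  then have count: "length (filter (\<lambda>k. k < f x) (map f ks)) = length (filter (\<lambda>k. k < x) ks)" by simp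
  show ?case
  proof (cases "ts \<noteq> [] \<and> length (filter (\<lambda>k. k < x) ks) < length ts")
    case True
    define i where "i = length (filter (\<lambda>k. k < x) ks)"
    have child: "ts ! i \<in> set ts" using True i_def by simp
    then have "ins m (f x) (map_btree f (ts ! i)) = map_up f (ins m x (ts ! i))"
      using Node.IH Node.prems by (auto intro: monotone_on_subset)
    then show ?thesis using True count i_def[symmetric]
      by (cases "ins m x (ts ! i)") (simp_all add: Let_def map_update split_node_map take_map drop_map)
  qed (use count mono_ks in \<open>auto simp: Let_def split_node_map insort_map_strict_mono\<close>)
qed

lemma binsert_map:
  "strict_mono_on (insert x (keyset t)) f \<Longrightarrow> binsert m (f x) (map_btree f t) = map_btree f (binsert m x t)"
  using ins_map[of x t f m] by (cases "ins m x t") (simp_all add: binsert_def)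

lemma build_map:
  fixes xs :: "'a::linorder list" and f :: "'a \<Rightarrow> 'b::linorder"
  assumes "1 \<le> m" "distinct xs" "xs \<noteq> []" "strict_mono_on (set xs) f"
  shows "build m (map f xs) = map_btree f (build m xs)"
  using assms(2-)
proof (induction xs rule: rev_induct)
  case (snoc y ys)
  show ?case
  proof (cases "ys = []")
    case False
    have "build m (map f ys) = map_btree f (build m ys)"
      using snoc False by (auto intro: monotone_on_subset)
    moreover have "strict_mono_on (insert y (keyset (build m ys))) f"
      using snoc.prems keyset_build[OF assms(1), of ys] False by simp
    ultimately show ?thesis using False build_snoc[of ys] build_snoc[of "map f ys"] binsert_map by simp
  qed (simp add: build_singleton)
qed simp

lemma strict_mono_on_rank:
  fixes S :: "'a::linorder set"
  assumes "finite S"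
  shows "strict_mono_on S (\<lambda>k. card {k' \<in> S. k' \<le> k})"
proof (rule strict_mono_onI)
  fix a b assume "a \<in> S" "b \<in> S" "a < b"
  then have "b \<in> {k' \<in> S. k' \<le> b} - {k' \<in> S. k' \<le> a}" by auto
  moreover have "{k' \<in> S. k' \<le> a} \<subseteq> {k' \<in> S. k' \<le> b}" using \<open>a < b\<close> by auto
  ultimately have "{k' \<in> S. k' \<le> a} \<subset> {k' \<in> S. k' \<le> b}" by blast
  then show "card {k' \<in> S. k' \<le> a} < card {k' \<in> S. k' \<le> b}"
    using assms by (intro psubset_card_mono) auto
qed

lemma nkeys_map: "nkeys (map_btree f t) = nkeys t"
  by (induction t) (simp_all add: comp_def cong: map_cong)

lemma inner_keys_map: "inner_keys (map_btree f t) = inner_keys t"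
  by (induction t) (simp_all add: comp_def cong: map_cong)

lemma del_leaves_map: "del_leaves (map_btree f t) = map_btree f (del_leaves t)"
  by (induction t) (simp_all add: comp_def list_all_iff btree.map_sel cong: map_cong)

lemma shape_map: "shape (map_btree f t) = shape t"
  by (simp add: shape_def btree.map_comp comp_def)

lemma kids_shape: "kids (shape t) = map shape (kids t)"
  by (cases t) (simp add: shape_def)

section \<open>Insertion seen from the tree without its leaves\<close>

lemma balanced_kids: "balanced t d \<Longrightarrow> kids t = [] \<longleftrightarrow> d = 0"
  by (cases t) (auto split: if_splits)

lemma del_leaves_Node_inner:
  "ts \<noteq> [] \<Longrightarrow> \<forall>t\<in>set ts. kids t \<noteq> [] \<Longrightarrow> del_leaves (Node ks ts) = Node ks (map del_leaves ts)"
  by (cases ts) auto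

lemma keyset_del_leaves: "keyset (del_leaves t) \<subseteq> keyset t"
  by (induction t) auto

lemma nkeys_del_leaves: "balanced t d \<Longrightarrow> 1 \<le> d \<Longrightarrow> nkeys (del_leaves t) = inner_keys t"
proof (induction t arbitrary: d)
  case (Node ks ts)
  have ne: "ts \<noteq> []" and children: "\<forall>t\<in>set ts. balanced t (d - 1)"
    using Node.prems by (auto simp: list_all_iff split: if_splits)
  show ?case
  proof (cases "d = 1")
    case True
    then have "\<forall>t\<in>set ts. kids t = []" using children balanced_kids by fastforce
    moreover from this have "\<forall>t\<in>set ts. inner_keys t = 0" by (metis btree.collapse inner_keys.simps)
    then have "sum_list (map inner_keys ts) = 0" by (simp add: sum_list_eq_0_iff)
    ultimately show ?thesis using ne by (simp add: list_all_iff)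
  next
    case False
    then have "\<forall>t\<in>set ts. kids t \<noteq> [] \<and> nkeys (del_leaves t) = inner_keys t"
      using Node children balanced_kids by fastforce
    then show ?thesis using ne by (simp add: list_all_iff comp_def cong: map_cong)
  qed
qed

definition del_leaves_up :: "'a up \<Rightarrow> 'a up" where
  "del_leaves_up u = (case u of
      Ok t \<Rightarrow> Ok (del_leaves t)
    | Split l k r \<Rightarrow> Split (del_leaves l) k (del_leaves r))"

definition up_balanced :: "'a up \<Rightarrow> nat \<Rightarrow> bool" where
  "up_balanced u d \<longleftrightarrow> (case u of Ok t \<Rightarrow> balanced t d | Split l k r \<Rightarrow> balanced l d \<and> balanced r d)"

lemma del_leaves_up_split_node:
  assumes "length ts = Suc (length ks)" "\<forall>t\<in>set ts. kids t \<noteq> []"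
  shows "del_leaves_up (split_node m ks ts) = split_node m ks (map del_leaves ts)"
proof (cases "length ks = 2 * m + 1")
  case True
  have "take (Suc m) ts \<noteq> []" "drop (Suc m) ts \<noteq> []" using True assms(1) by auto
  moreover have "\<forall>t\<in>set (take (Suc m) ts). kids t \<noteq> []" "\<forall>t\<in>set (drop (Suc m) ts). kids t \<noteq> []"
    using assms(2) by (blast dest: in_set_takeD in_set_dropD)+
  ultimately have "del_leaves (Node ks' (take (Suc m) ts)) = Node ks' (map del_leaves (take (Suc m) ts))"
    "del_leaves (Node ks' (drop (Suc m) ts)) = Node ks' (map del_leaves (drop (Suc m) ts))" for ks'
    by (simp_all add: del_leaves_Node_inner del: del_leaves.simps)
  then show ?thesis using True by (simp add: split_node_def del_leaves_up_def take_map drop_map)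
next
  case False
  have "ts \<noteq> []" using assms(1) by auto
  then have "del_leaves (Node ks ts) = Node ks (map del_leaves ts)"
    using assms(2) by (rule del_leaves_Node_inner)
  then show ?thesis using False by (simp add: split_node_def del_leaves_up_def)
qed

lemma del_leaves_up_split_node_leaves:
  assumes "\<forall>t\<in>set ts. kids t = []"
  shows "del_leaves_up (split_node m ks ts) = split_node m ks []"
proof -
  have "\<forall>t\<in>set (take (Suc m) ts). kids t = []" "\<forall>t\<in>set (drop (Suc m) ts). kids t = []"
    using assms by (blast dest: in_set_takeD in_set_dropD)+
  then show ?thesis using assms by (simp add: split_node_def del_leaves_up_def list_all_iff)
qed

lemma del_leaves_ins_parent:
  assumes "length ts = Suc (length ks)" "i < length ts" "\<forall>t\<in>set ts. balanced t d" "up_balanced u d" "1 \<le> d"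
  shows "del_leaves_up (ins_parent m ks ts i u) = ins_parent m ks (map del_leaves ts) i (del_leaves_up u)"
proof -
  have inner: "kids t \<noteq> []" if "balanced t d" for t :: "'a btree"
    using that assms(5) balanced_kids by fastforce
  show ?thesis
  proof (cases u)
    case (Ok t)
    have "\<forall>t'\<in>set (ts[i := t]). kids t' \<noteq> []"
      using assms(3,4) Ok set_update_subset_insert[of ts i t] inner by (auto simp: up_balanced_def)
    moreover have "ts[i := t] \<noteq> []" using assms(2) by auto
    ultimately have "del_leaves (Node ks (ts[i := t])) = Node ks (map del_leaves (ts[i := t]))"
      by (rule del_leaves_Node_inner[rotated])
    then show ?thesis using Ok by (simp add: del_leaves_up_def ins_parent_def map_update)
  next
    case (Split l k r)
    let ?ks = "take i ks @ k # drop i ks" and ?ts = "take i ts @ l # r # drop (Suc i) ts"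
    have "\<forall>t\<in>set ?ts. kids t \<noteq> []"
      using assms(3,4) Split inner by (auto simp: up_balanced_def dest: in_set_takeD in_set_dropD)
    then have "del_leaves_up (split_node m ?ks ?ts) = split_node m ?ks (map del_leaves ?ts)"
      using assms(1,2) by (intro del_leaves_up_split_node) auto
    then show ?thesis using Split by (simp add: del_leaves_up_def ins_parent_def take_map drop_map)
  qed
qed

lemma ins_parent_route:
  assumes "ts \<noteq> []" "i < length ts" "i \<le> length ks" "\<forall>K. r = Some K \<longrightarrow> in_slot ks i K"
  shows "ins_parent m ks ts i (case r of None \<Rightarrow> Ok (ts ! i) | Some K \<Rightarrow> ins m K (ts ! i)) =
    (case r of None \<Rightarrow> Ok (Node ks ts) | Some K \<Rightarrow> ins m K (Node ks ts))"
proof (cases r)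
  case (Some K)
  then have "filter (\<lambda>k. k < K) ks = take i ks" using filter_less_in_slot assms(4) by simp
  then have "length (filter (\<lambda>k. k < K) ks) = i" using assms(3) by simp
  then show ?thesis using Some ins_Node[OF assms(1) _ assms(2)] by simp
qed (simp add: ins_parent_def)

lemma del_leaves_ins_parent_inner:
  assumes "length ts = Suc (length ks)" "i < length ts" "\<forall>t\<in>set ts. balanced t d" "up_balanced u d" "1 \<le> d"
    and "del_leaves_up u =
      (case r of None \<Rightarrow> Ok (del_leaves (ts ! i)) | Some K \<Rightarrow> ins m K (del_leaves (ts ! i)))"
    and "\<forall>K. r = Some K \<longrightarrow> in_slot ks i K"
  shows "del_leaves_up (ins_parent m ks ts i u) =
    (case r of None \<Rightarrow> Ok (del_leaves (Node ks ts)) | Some K \<Rightarrow> ins m K (del_leaves (Node ks ts)))"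
proof -
  have "del_leaves_up (ins_parent m ks ts i u) = ins_parent m ks (map del_leaves ts) i (del_leaves_up u)"
    by (rule del_leaves_ins_parent[OF assms(1-5)])
  also have "\<dots> = ins_parent m ks (map del_leaves ts) i
      (case r of None \<Rightarrow> Ok (map del_leaves ts ! i) | Some K \<Rightarrow> ins m K (map del_leaves ts ! i))"
    using assms(2,6) by (simp cong: option.case_cong)
  also have "\<dots> = (case r of
      None \<Rightarrow> Ok (Node ks (map del_leaves ts)) | Some K \<Rightarrow> ins m K (Node ks (map del_leaves ts)))"
    using assms(1,2,7) by (intro ins_parent_route) auto
  also have "Node ks (map del_leaves ts) = del_leaves (Node ks ts)"
    using assms(1,3,5) balanced_kids by (intro del_leaves_Node_inner[symmetric]) fastforce+
  finally show ?thesis .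
qed

lemma del_leaves_ins_parent_leaf:
  assumes "\<forall>t\<in>set ts. kids t = []" "kids c = []" "\<forall>K. leaf_median m x c = Some K \<longrightarrow> in_slot ks i K"
  shows "del_leaves_up (ins_parent m ks ts i (ins m x c)) =
    (case leaf_median m x c of
      None \<Rightarrow> Ok (del_leaves (Node ks ts)) | Some K \<Rightarrow> ins m K (del_leaves (Node ks ts)))"
proof -
  obtain cks where c: "c = Node cks []" using assms(2) by (cases c) simp
  have del: "del_leaves (Node ks ts) = Node ks []" using assms(1) by (simp add: list_all_iff)
  show ?thesis
  proof (cases "length cks = 2 * m")
    case True
    let ?L = "insort x cks"
    let ?ts = "take i ts @ Node (take m ?L) [] # Node (drop (Suc m) ?L) [] # drop (Suc i) ts"
    have "\<forall>t\<in>set ?ts. kids t = []" using assms(1) by (auto dest: in_set_takeD in_set_dropD)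
    moreover have "ins m x c = Split (Node (take m ?L) []) (?L ! m) (Node (drop (Suc m) ?L) [])"
      using c True by (simp add: split_node_def length_insort)
    moreover have "insort (?L ! m) ks = take i ks @ ?L ! m # drop i ks"
      using assms(3) c True by (simp add: insort_in_slot)
    ultimately show ?thesis
      using c True del by (simp add: ins_parent_def del_leaves_up_split_node_leaves)
  next
    case False
    have "\<forall>t\<in>set (ts[i := Node (insort x cks) []]). kids t = []"
      using assms(1) set_update_subset_insert[of ts i] by fastforce
    then show ?thesis
      using c False del
      by (simp add: ins_parent_def split_node_def length_insort del_leaves_up_def list_all_iff)
  qed
qed

lemma leaf_median_in: "leaf_median m x t = Some K \<Longrightarrow> K \<in> insert x (keyset t)"
proof (induction t)
  case (Node ks ts)
  show ?case
  proof (cases "ts = []")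
    case True
    then have "K \<in> set (insort x ks)" using Node.prems by (auto simp: length_insort split: if_splits)
    then show ?thesis by (auto simp: set_insort_key)
  next
    case False
    then obtain i where "i < length ts" "leaf_median m x (ts ! i) = Some K"
      using Node.prems by (auto simp: Let_def split: if_splits)
    then show ?thesis using Node.IH[of "ts ! i"] by auto
  qed
qed

lemma in_slot_leaf_median:
  assumes "well_sized m (Node ks ts)" "ts \<noteq> []"
    and "sorted_wrt (<) (inorder (Node ks ts))" "x \<notin> set (inorder (Node ks ts))"
    and "leaf_median m x (Node ks ts) = Some K"
  shows "in_slot ks (length (filter (\<lambda>k. k < x) ks)) K"
proof -
  let ?i = "length (filter (\<lambda>k. k < x) ks)"
  note descend = Node_descend[OF assms(1-4)]
  have "leaf_median m x (ts ! ?i) = Some K" using assms(5) descend(6) by simp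
  then have "K \<in> insert x (keyset (ts ! ?i))" by (rule leaf_median_in)
  moreover have "keyset (ts ! ?i) = set (map inorder ts ! ?i)"
    using assms(1) descend(1) keyset_inorder[of m "ts ! ?i"] by simp
  ultimately show ?thesis
    using in_slot_interleave_child[of "map inorder ts" ks ?i K] assms(1-3) descend(1,2) by auto
qed

lemma in_slot_notin_sibling:
  assumes "well_sized m (Node ks ts)" "ts \<noteq> []" "sorted_wrt (<) (inorder (Node ks ts))"
    and "in_slot ks i y" "i < length ts" "j < length ts" "j \<noteq> i"
  shows "y \<notin> keyset (ts ! j)"
proof -
  let ?cs = "map inorder ts"
  have len: "length ?cs = Suc (length ks)" using assms(1,2) by simp
  have sorted: "sorted_wrt (<) (interleave ?cs ks)" using assms(2,3) by simp
  have keys: "keyset (ts ! j) = set (?cs ! j)" using assms(1,6) keyset_inorder[of m "ts ! j"] by simp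
  have bounds: "(\<forall>a\<in>set (interleave_left ?cs ks i). a < y) \<and> (\<forall>b\<in>set (interleave_right ?cs ks i). y < b)"
    using in_slot_interleave[OF len _ sorted assms(4)] assms(5) by simp
  show ?thesis
  proof (cases "j < i")
    case True
    then have "?cs ! j \<in> set (take i ?cs)" using assms(6) by (auto simp: in_set_conv_nth)
    then have "set (?cs ! j) \<subseteq> set (interleave_left ?cs ks i)"
      using set_interleave_left[OF _ len] assms(5) len by auto
    then show ?thesis using keys bounds by auto
  next
    case False
    then have "?cs ! j \<in> set (drop (Suc i) ?cs)"
      using assms(6,7) by (auto simp: in_set_conv_nth intro!: exI[of _ "j - Suc i"])
    then have "set (?cs ! j) \<subseteq> set (interleave_right ?cs ks i)"
      using set_interleave_right[OF len] by auto
    then show ?thesis using keys bounds by auto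
  qed
qed

lemma del_leaves_ins:
  fixes t :: "'a::linorder btree"
  assumes "1 \<le> m" "well_sized m t" "balanced t d" "1 \<le> d" "sorted_wrt (<) (inorder t)" "x \<notin> set (inorder t)"
    and "length (bkeys t) \<le> 2 * m"
  shows "del_leaves_up (ins m x t) =
    (case leaf_median m x t of None \<Rightarrow> Ok (del_leaves t) | Some K \<Rightarrow> ins m K (del_leaves t))"
  using assms(2-)
proof (induction t arbitrary: d)
  case (Node ks ts)
  have ne: "ts \<noteq> []" using Node.prems(2,3) by (auto split: if_splits)
  define i where "i = length (filter (\<lambda>k. k < x) ks)"
  note descend = Node_descend[OF Node.prems(1) ne Node.prems(4,5), folded i_def]
  have len: "length ts = Suc (length ks)" using Node.prems(1) ne by simp
  have child: "ts ! i \<in> set ts" using descend(1) by simp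
  have children: "\<forall>t\<in>set ts. balanced t (d - 1) \<and> well_sized m t \<and> length (bkeys t) \<le> 2 * m"
    using Node.prems(1,2) ne by (auto simp: list_all_iff)
  have slots: "\<forall>K. leaf_median m x (ts ! i) = Some K \<longrightarrow> in_slot ks i K"
    using in_slot_leaf_median[OF Node.prems(1) ne Node.prems(4,5)] descend(6) i_def by simp
  have "del_leaves_up (ins_parent m ks ts i (ins m x (ts ! i))) = (case leaf_median m x (ts ! i) of
      None \<Rightarrow> Ok (del_leaves (Node ks ts)) | Some K \<Rightarrow> ins m K (del_leaves (Node ks ts)))"
  proof (cases "d = 1")
    case True
    then have "\<forall>t\<in>set ts. kids t = []" using children balanced_kids by fastforce
    moreover from this have "kids (ts ! i) = []" using child by blast
    ultimately show ?thesis using slots by (rule del_leaves_ins_parent_leaf)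
  next
    case False
    then have d: "1 \<le> d - 1" using Node.prems(3) by simp
    have "up_invar m (d - 1) (insort x (inorder (ts ! i))) (length (bkeys (ts ! i))) (ins m x (ts ! i))"
      using up_invar_ins[OF assms(1)] children child descend(3,4) by blast
    then have "up_balanced (ins m x (ts ! i)) (d - 1)"
      by (auto simp: up_invar_def up_balanced_def split: up.splits)
    moreover have "del_leaves_up (ins m x (ts ! i)) = (case leaf_median m x (ts ! i) of
        None \<Rightarrow> Ok (del_leaves (ts ! i)) | Some K \<Rightarrow> ins m K (del_leaves (ts ! i)))"
      using Node.IH[OF child, of "d - 1"] children child d descend(3,4) by simp
    ultimately show ?thesis
      using del_leaves_ins_parent_inner[OF len descend(1) _ _ d _ slots] children by simp
  qed
  then show ?case using descend(5,6) by simp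
qed

lemma leaf_median_fresh:
  fixes t :: "'a::linorder btree"
  assumes "well_sized m t" "balanced t d" "1 \<le> d" "sorted_wrt (<) (inorder t)" "x \<notin> set (inorder t)"
    and "leaf_median m x t = Some K"
  shows "K \<notin> keyset (del_leaves t)"
  using assms
proof (induction t arbitrary: d)
  case (Node ks ts)
  have ne: "ts \<noteq> []" using Node.prems(2,3) by (auto split: if_splits)
  define i where "i = length (filter (\<lambda>k. k < x) ks)"
  note descend = Node_descend[OF Node.prems(1) ne Node.prems(4,5), folded i_def]
  have median: "leaf_median m x (ts ! i) = Some K" using descend(6) Node.prems(6) by simp
  have slot: "in_slot ks i K"
    using in_slot_leaf_median[OF Node.prems(1) ne Node.prems(4,5,6)] i_def by simp
  have siblings: "K \<notin> keyset (ts ! j)" if "j < length ts" "j \<noteq> i" for j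
    using in_slot_notin_sibling[OF Node.prems(1) ne Node.prems(4) slot descend(1) that] .
  have children: "\<forall>t\<in>set ts. balanced t (d - 1) \<and> well_sized m t"
    using Node.prems(1,2) ne by (auto simp: list_all_iff)
  show ?case
  proof (cases "d = 1")
    case True
    then have "\<forall>t\<in>set ts. kids t = []" using children balanced_kids by fastforce
    then show ?thesis using in_slot_notin[OF slot] by (simp add: list_all_iff)
  next
    case False
    then have d: "1 \<le> d - 1" using Node.prems(3) by simp
    have target: "K \<notin> keyset (del_leaves (ts ! i))"
      using Node.IH[of "ts ! i" "d - 1"] children d median descend by simp
    have "K \<notin> keyset (del_leaves t)" if t: "t \<in> set ts" for t
    proof -
      obtain j where j: "j < length ts" "t = ts ! j" using t by (auto simp: in_set_conv_nth)
      show ?thesis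
      proof (cases "j = i")
        case False
        then show ?thesis using siblings[OF j(1) False] keyset_del_leaves[of t] j(2) by blast
      qed (use target j in simp)
    qed
    moreover have "\<forall>t\<in>set ts. kids t \<noteq> []" using children d balanced_kids by fastforce
    then have "del_leaves (Node ks ts) = Node ks (map del_leaves ts)"
      using ne by (rule del_leaves_Node_inner[rotated])
    ultimately show ?thesis using in_slot_notin[OF slot] by simp
  qed
qed

lemma del_leaves_binsert:
  assumes "1 \<le> m" "btree_invar m t d" "1 \<le> d" "x \<notin> set (inorder t)"
  shows "del_leaves (binsert m x t) =
    (case leaf_median m x t of None \<Rightarrow> del_leaves t | Some K \<Rightarrow> binsert m K (del_leaves t))"
proof -
  have invar: "well_sized m t" "balanced t d" "sorted_wrt (<) (inorder t)" "length (bkeys t) \<le> 2 * m"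
    using assms(2) by (auto simp: btree_invar_def)
  have del_ins: "del_leaves_up (ins m x t) =
      (case leaf_median m x t of None \<Rightarrow> Ok (del_leaves t) | Some K \<Rightarrow> ins m K (del_leaves t))"
    using del_leaves_ins[OF assms(1) invar(1,2) assms(3) invar(3) assms(4) invar(4)] .
  have "up_invar m d (insort x (inorder t)) (length (bkeys t)) (ins m x t)"
    using up_invar_ins[OF assms(1) invar(1-3) assms(4) invar(4)] .
  then have new_root: "del_leaves (Node [k] [l, r]) = Node [k] [del_leaves l, del_leaves r]"
    if "ins m x t = Split l k r" for l k r
    using that assms(3) balanced_kids[of l d] balanced_kids[of r d] by (auto simp: up_invar_def)
  show ?thesis
  proof (cases "ins m x t")
    case (Ok t')
    then show ?thesis
      using del_ins by (auto simp: binsert_def del_leaves_up_def split: option.splits up.splits)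
  next
    case (Split l k r)
    then show ?thesis using del_ins new_root[OF Split]
      by (auto simp: binsert_def del_leaves_up_def split: option.splits up.splits)
  qed
qed

text \<open>
  \<open>Ks\<close> is the sequence of medians pushed out of leaves so far: none while \<open>t\<close> is a single leaf, and
  afterwards the tree without the leaves of \<open>t\<close> is built from them.
\<close>

definition upper_tree :: "nat \<Rightarrow> 'a::linorder btree \<Rightarrow> 'a list \<Rightarrow> bool" where
  "upper_tree m t Ks \<longleftrightarrow>
     (if Ks = [] then kids t = [] else kids t \<noteq> [] \<and> del_leaves t = build m Ks \<and> distinct Ks)"

lemma upper_tree_binsert_leaf:
  assumes "kids t = []"
  shows "upper_tree m (binsert m x t) (case leaf_median m x t of None \<Rightarrow> [] | Some K \<Rightarrow> [K])"
proof -
  obtain ks where "t = Node ks []" using assms by (cases t) simp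
  then show ?thesis by (auto simp: upper_tree_def binsert_def split_node_def length_insort build_singleton)
qed

lemma upper_tree_binsert:
  assumes "1 \<le> m" "btree_invar m t d" "x \<notin> set (inorder t)" "upper_tree m t Ks"
  shows "upper_tree m (binsert m x t) (Ks @ (case leaf_median m x t of None \<Rightarrow> [] | Some K \<Rightarrow> [K]))"
proof (cases "Ks = []")
  case True
  then have "kids t = []" using assms(4) by (simp add: upper_tree_def)
  then show ?thesis using True upper_tree_binsert_leaf[of t m x] by simp
next
  case False
  then have t: "kids t \<noteq> []" "del_leaves t = build m Ks" "distinct Ks"
    using assms(4) by (simp_all add: upper_tree_def)
  then have d: "1 \<le> d" using assms(2) balanced_kids by (fastforce simp: btree_invar_def)
  obtain d' where "d \<le> d'" "btree_invar m (binsert m x t) d'" using binsert_invar[OF assms(1-3)] by blast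
  then have inner: "kids (binsert m x t) \<noteq> []" using d balanced_kids by (fastforce simp: btree_invar_def)
  show ?thesis
  proof (cases "leaf_median m x t")
    case None
    then show ?thesis
      using inner t False del_leaves_binsert[OF assms(1,2) d assms(3)] by (simp add: upper_tree_def)
  next
    case (Some K)
    have "K \<notin> keyset (del_leaves t)"
      using leaf_median_fresh[OF _ _ d _ assms(3) Some] assms(2) by (auto simp: btree_invar_def)
    then have "K \<notin> set Ks" using t keyset_build[OF assms(1) t(3) False] by simp
    then show ?thesis using Some inner t False del_leaves_binsert[OF assms(1,2) d assms(3)]
      by (simp add: upper_tree_def build_snoc)
  qed
qed

section \<open>Histories\<close>

definition build_prefixes :: "nat \<Rightarrow> 'a::linorder list \<Rightarrow> 'a btree list" where
  "build_prefixes m xs = map (\<lambda>j. build m (take j xs)) [1..<length xs + 1]"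

lemma build_prefixes_snoc: "build_prefixes m (xs @ [x]) = build_prefixes m xs @ [build m (xs @ [x])]"
  by (auto simp: build_prefixes_def)

lemma length_build_prefixes [simp]: "length (build_prefixes m xs) = length xs"
  by (simp add: build_prefixes_def del: upt_Suc)

lemma nth_build_prefixes: "i < length xs \<Longrightarrow> build_prefixes m xs ! i = build m (take (Suc i) xs)"
  by (simp add: build_prefixes_def del: upt_Suc)

lemma is_history_build_prefixes:
  fixes xs :: "nat list"
  assumes "1 \<le> m" "distinct xs" "xs \<noteq> []"
  shows "is_history m (map shape (build_prefixes m xs)) (shape (build m xs))"
proof -
  let ?Ts = "map shape (build_prefixes m xs)"
  have prefix: "distinct (take (Suc i) xs)" "take (Suc i) xs \<noteq> []" for i
    using assms(2,3) by auto
  have nth: "?Ts ! i = shape (build m (take (Suc i) xs))" if "i < length xs" for i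
    using that by (simp add: nth_build_prefixes)
  have valid: "\<exists>S :: nat btree. is_btree m S \<and> shape S = A" if "A \<in> set ?Ts" for A
  proof -
    obtain i where "i < length xs" "A = shape (build m (take (Suc i) xs))"
      using \<open>A \<in> set ?Ts\<close> nth by (auto simp: in_set_conv_nth)
    then show ?thesis using build_invar[OF assms(1) prefix] is_btree_if_invar by blast
  qed
  have step: "one_insertion m (?Ts ! i) (?Ts ! Suc i)" if "Suc i < length ?Ts" for i
  proof -
    let ?S = "build m (take (Suc i) xs)" and ?x = "xs ! Suc i"
    have take: "take (Suc (Suc i)) xs = take (Suc i) xs @ [?x]"
      using that by (simp add: take_Suc_conv_app_nth)
    then have "?x \<notin> keyset ?S"
      using keyset_build[OF assms(1) prefix] distinct_take[OF assms(2), of "Suc (Suc i)"] by simp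
    moreover have "?Ts ! i = shape ?S" "?Ts ! Suc i = shape (binsert m ?x ?S)"
      using that nth take build_snoc[OF prefix(2)] by simp_all
    moreover have "is_btree m ?S" using build_invar[OF assms(1) prefix] is_btree_if_invar by blast
    ultimately show ?thesis unfolding one_insertion_def by (intro exI[of _ ?S] exI[of _ ?x]) simp
  qed
  have "nkeys (shape (build m xs)) = length xs"
    using nkeys_build[OF assms] by (simp add: shape_def nkeys_map)
  moreover have ne: "?Ts \<noteq> []" using assms(3) by (metis length_0_conv length_build_prefixes length_map)
  then have "last ?Ts = shape (build m xs)"
    using assms(3) nth[of "length xs - 1"] by (simp add: last_conv_nth)
  moreover have "hd ?Ts = shape (build m [hd xs])"
    using ne assms(3) nth[of 0] by (simp add: hd_conv_nth take_Suc)
  then have "nkeys (hd ?Ts) = 1" by (simp add: build_singleton shape_def)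
  ultimately show ?thesis using ne valid step by (simp add: is_history_def)
qed

lemma shape_build_prefixes_map:
  fixes xs :: "'a::linorder list" and f :: "'a \<Rightarrow> 'b::linorder"
  assumes "1 \<le> m" "distinct xs" "strict_mono_on (set xs) f"
  shows "map shape (build_prefixes m (map f xs)) = map shape (build_prefixes m xs)"
proof -
  have "shape (build m (map f (take j xs))) = shape (build m (take j xs))" if "1 \<le> j" "j \<le> length xs" for j
  proof -
    have "strict_mono_on (set (take j xs)) f"
      using assms(3) by (rule monotone_on_subset) (rule set_take_subset)
    moreover have "distinct (take j xs)" "take j xs \<noteq> []" using assms(2) that by auto
    ultimately show ?thesis using build_map[OF assms(1), of "take j xs" f] by (simp add: shape_map)
  qed
  then show ?thesis by (auto simp: build_prefixes_def take_map)
qed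

lemma shape_build_prefixes_std_perm:
  assumes "1 \<le> m" "distinct ks"
  shows "map shape (build_prefixes m (std_perm ks)) = map shape (build_prefixes m ks)"
proof -
  have "std_perm ks = map (\<lambda>k. card {k' \<in> set ks. k' \<le> k}) ks" by (simp add: std_perm_def)
  then show ?thesis
    using shape_build_prefixes_map[OF assms] strict_mono_on_rank[of "set ks"] by simp
qed

definition split_times :: "nat \<Rightarrow> (nat \<Rightarrow> nat) \<Rightarrow> nat \<Rightarrow> nat list" where
  "split_times m \<pi> p = filter (\<lambda>i. leaf_median m (\<pi> i) (bt_after m \<pi> (i - 1)) \<noteq> None) [2..<p + 1]"

definition split_medians :: "nat \<Rightarrow> (nat \<Rightarrow> nat) \<Rightarrow> nat \<Rightarrow> nat list" where
  "split_medians m \<pi> p = map (\<lambda>i. the (leaf_median m (\<pi> i) (bt_after m \<pi> (i - 1)))) (split_times m \<pi> p)"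

lemma bt_after_Suc: "1 \<le> p \<Longrightarrow> bt_after m \<pi> (Suc p) = binsert m (\<pi> (Suc p)) (bt_after m \<pi> p)"
  using build_snoc[of "map \<pi> [1..<p + 1]" m "\<pi> (Suc p)"] by (simp add: bt_after_def)

lemma bt_after_invar:
  assumes "1 \<le> m" "\<pi> permutes {1..n}" "1 \<le> p"
  shows "\<exists>d. btree_invar m (bt_after m \<pi> p) d \<and> set (inorder (bt_after m \<pi> p)) = \<pi> ` {1..p}"
proof -
  have "distinct (map \<pi> [1..<p + 1])"
    using permutes_inj[OF assms(2)] by (simp add: distinct_map inj_on_def)
  moreover have "map \<pi> [1..<p + 1] \<noteq> []" using assms(3) by simp
  moreover have "set (map \<pi> [1..<p + 1]) = \<pi> ` {1..p}" by auto
  ultimately show ?thesis using build_invar[OF assms(1)] unfolding bt_after_def by metis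
qed

lemma upper_tree_bt_after:
  assumes "1 \<le> m" "\<pi> permutes {1..n}" "1 \<le> p" "p \<le> n"
  shows "upper_tree m (bt_after m \<pi> p) (split_medians m \<pi> p) \<and>
    map (\<lambda>i. del_leaves (bt_after m \<pi> i)) (split_times m \<pi> p) = build_prefixes m (split_medians m \<pi> p)"
  using assms(3,4)
proof (induction p rule: dec_induct)
  case base
  then show ?case
    by (simp add: split_times_def split_medians_def upper_tree_def bt_after_def build_def build_prefixes_def)
next
  case (step k)
  let ?T = "bt_after m \<pi>" and ?x = "\<pi> (Suc k)"
  obtain d where d: "btree_invar m (?T k) d" "set (inorder (?T k)) = \<pi> ` {1..k}"
    using bt_after_invar[OF assms(1,2) step.hyps(1)] by blast
  have "?x \<notin> \<pi> ` {1..k}" using permutes_inj[OF assms(2)] by (auto simp: inj_eq)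
  then have fresh: "?x \<notin> set (inorder (?T k))" using d(2) by simp
  have times: "split_times m \<pi> (Suc k) =
      split_times m \<pi> k @ (if leaf_median m ?x (?T k) = None then [] else [Suc k])"
    using step.hyps(1) by (simp add: split_times_def)
  have medians: "split_medians m \<pi> (Suc k) =
      split_medians m \<pi> k @ (case leaf_median m ?x (?T k) of None \<Rightarrow> [] | Some K \<Rightarrow> [K])"
    using times by (auto simp: split_medians_def split: option.split)
  have upper: "upper_tree m (?T (Suc k)) (split_medians m \<pi> (Suc k))"
    using upper_tree_binsert[OF assms(1) d(1) fresh] step bt_after_Suc[OF step.hyps(1)] medians by simp
  show ?case
  proof (cases "leaf_median m ?x (?T k)")
    case (Some K)
    then have "del_leaves (?T (Suc k)) = build m (split_medians m \<pi> k @ [K])"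
      using upper medians by (simp add: upper_tree_def)
    then show ?thesis using upper step times medians Some by (simp add: build_prefixes_snoc)
  qed (use upper step times medians in simp)
qed

lemma del_leaves_bt_after:
  assumes "1 \<le> m" "\<pi> permutes {1..n}" "kids (bt_after m \<pi> n) \<noteq> []"
  shows "split_medians m \<pi> n \<noteq> []" "distinct (split_medians m \<pi> n)"
    and "del_leaves (bt_after m \<pi> n) = build m (split_medians m \<pi> n)"
    and "inner_keys (bt_after m \<pi> n) = length (split_medians m \<pi> n)"
    and "map (\<lambda>i. del_leaves (bt_after m \<pi> i)) (split_times m \<pi> n) = build_prefixes m (split_medians m \<pi> n)"
proof -
  have n: "1 \<le> n" using assms(3) by (cases n) (simp_all add: bt_after_def build_def)
  obtain d where d: "btree_invar m (bt_after m \<pi> n) d" using bt_after_invar[OF assms(1,2) n] by blast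
  then have d1: "1 \<le> d" using assms(3) balanced_kids by (fastforce simp: btree_invar_def)
  note upper = upper_tree_bt_after[OF assms(1,2) n order_refl]
  then show Ks: "split_medians m \<pi> n \<noteq> []" "distinct (split_medians m \<pi> n)"
    and "del_leaves (bt_after m \<pi> n) = build m (split_medians m \<pi> n)"
    using assms(3) by (auto simp: upper_tree_def split: if_splits)
  then show "inner_keys (bt_after m \<pi> n) = length (split_medians m \<pi> n)"
    using nkeys_del_leaves[of "bt_after m \<pi> n" d] d d1 nkeys_build[OF assms(1) Ks(2,1)]
    by (simp add: btree_invar_def)
  show "map (\<lambda>i. del_leaves (bt_after m \<pi> i)) (split_times m \<pi> n) = build_prefixes m (split_medians m \<pi> n)"
    using upper by simp
qed

theorem mainTheorem5:
  fixes m n :: nat and \<pi> :: "nat \<Rightarrow> nat" and T :: "nat btree"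
  assumes "1 \<le> m"
    and "\<pi> permutes {1..n}"
    and "is_btree m T" and "nkeys T = n" and "1 \<le> height T"
    and "shape (bt_after m \<pi> n) = shape T"
  defines "n1 \<equiv> inner_keys T"
    and "I \<equiv> filter (\<lambda>i. leaf_median m (\<pi> i) (bt_after m \<pi> (i - 1)) \<noteq> None) [2..<n + 1]"
  shows "is_history m (map (\<lambda>i. shape (del_leaves (bt_after m \<pi> i))) I) (shape (del_leaves T))
       \<and> map (\<lambda>i. shape (del_leaves (bt_after m \<pi> i))) I
           = map (\<lambda>j. shape (build m (take j (std_perm
                (map (\<lambda>i. the (leaf_median m (\<pi> i) (bt_after m \<pi> (i - 1)))) I))))) [1..<n1 + 1]"
proof -
  define Ks where "Ks = split_medians m \<pi> n"
  have I_eq: "split_times m \<pi> n = I" unfolding I_def split_times_def ..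
  have Ks_eq: "map (\<lambda>i. the (leaf_median m (\<pi> i) (bt_after m \<pi> (i - 1)))) I = Ks"
    unfolding Ks_def split_medians_def I_eq ..
  have "kids T \<noteq> []" using assms(5) by (cases T) auto
  then have "kids (bt_after m \<pi> n) \<noteq> []"
    using arg_cong[OF assms(6), of kids] by (metis Nil_is_map_conv kids_shape)
  note upper = del_leaves_bt_after[OF assms(1,2) this, unfolded I_eq, folded Ks_def]
  have "n1 = length Ks" using assms(6) upper(4) inner_keys_map[of "\<lambda>_. ()"] by (metis n1_def shape_def)
  then have "map (\<lambda>j. shape (build m (take j (std_perm Ks)))) [1..<n1 + 1] = map shape (build_prefixes m Ks)"
    using shape_build_prefixes_std_perm[OF assms(1) upper(2)]
    by (simp add: build_prefixes_def std_perm_def del: upt_Suc)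
  moreover have "shape (del_leaves T) = shape (build m Ks)"
    using assms(6) upper(3) del_leaves_map[of "\<lambda>_. ()"] by (metis shape_def)
  moreover have "map (\<lambda>i. shape (del_leaves (bt_after m \<pi> i))) I = map shape (build_prefixes m Ks)"
    using arg_cong[OF upper(5), of "map shape"] by (simp add: comp_def)
  ultimately show ?thesis using is_history_build_prefixes[OF assms(1) upper(2,1)] Ks_eq by simp
qed

end
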